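(* Let $\Theta$ be finite, let $\mu$ be an updating rule that systematically distorts updated beliefs with distortion functions $(D_{p'})_{p'}$, and let $p\in\Delta(\Theta)$ have full support. Let $\sigma,\tau$ be experiments and $s,t$ signals, and set $q:=\mu_B(\sigma,p)(\cdot\mid s)$ and $r:=\mu_B(\tau,q)(\cdot\mid t)$, where $q$ and $D_p(q)$ have full support and $\sum_{\theta}q(\theta)\tau_\theta(t)>0$. Then \[\mu(\tau,D_p(q))(\cdot\mid t)=D_{D_p(q)}\!\left(\frac{r\cdot\frac{D_p(q)}{q}}{\sum_{\theta'\in\Theta}r(\theta')\frac{D_p(q)(\theta')}{q(\theta')}}\right),\] where products and quotients of beliefs are taken componentwise in $\theta$.
   Context: An experiment is $\tau=(\tau_\theta)_{\theta\in\Theta}$ with $\tau_\theta\in\Delta(S)$ for a fixed finite signal set $S$. An updating rule is a map $\mu$ sending an experiment $\sigma$, a prior $p\in\Delta(\Theta)$ and a signal $s\in S$ to a posterior $\mu(\sigma,p)(\cdot\mid s)\in\Delta(\Theta)$. Bayesian updating: $\mu_B(\sigma,p)(\theta\mid s)=\frac{\sigma_\theta(s)p(\theta)}{\sum_{\theta'}\sigma_{\theta'}(s)p(\theta')}$ whenever the denominator is positive. The rule $\mu$ systematically distorts updated beliefs if for every full-support prior $p'$ there is a function $D_{p'}:\Delta(\Theta)\to\Delta(\Theta)$ such that $\mu(\sigma,p')(\cdot\mid s)=D_{p'}(\mu_B(\sigma,p')(\cdot\mid s))$ for all experiments $\sigma$ and signals $s$. *)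

theory Defs
  imports Complex_Main
begin

text \<open>Beliefs are functions 'th \<Rightarrow> real; an experiment is a function
  'th \<Rightarrow> 's \<Rightarrow> real (tau_theta(s)).\<close>

definition is_dist :: "('a::finite \<Rightarrow> real) \<Rightarrow> bool" where
  "is_dist p \<longleftrightarrow> (\<forall>x. p x \<ge> 0) \<and> (\<Sum>x\<in>UNIV. p x) = 1"

definition full_support :: "('th::finite \<Rightarrow> real) \<Rightarrow> bool" where
  "full_support p \<longleftrightarrow> is_dist p \<and> (\<forall>\<theta>. p \<theta> > 0)"

definition is_experiment :: "('th::finite \<Rightarrow> 's::finite \<Rightarrow> real) \<Rightarrow> bool" where
  "is_experiment \<sigma> \<longleftrightarrow> (\<forall>\<theta>. is_dist (\<sigma> \<theta>))"

definition sig_prob :: "('th::finite \<Rightarrow> 's \<Rightarrow> real) \<Rightarrow> ('th \<Rightarrow> real) \<Rightarrow> 's \<Rightarrow> real" where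
  "sig_prob \<sigma> p s = (\<Sum>\<theta>'\<in>UNIV. \<sigma> \<theta>' s * p \<theta>')"

text \<open>Bayesian posterior (meaningful whenever sig_prob \<sigma> p s > 0).\<close>
definition bayes :: "('th::finite \<Rightarrow> 's \<Rightarrow> real) \<Rightarrow> ('th \<Rightarrow> real) \<Rightarrow> 's \<Rightarrow> ('th \<Rightarrow> real)" where
  "bayes \<sigma> p s = (\<lambda>\<theta>. \<sigma> \<theta> s * p \<theta> / sig_prob \<sigma> p s)"

type_synonym ('th, 's) rule =
  "('th \<Rightarrow> 's \<Rightarrow> real) \<Rightarrow> ('th \<Rightarrow> real) \<Rightarrow> 's \<Rightarrow> ('th \<Rightarrow> real)"

text \<open>The updating rule mu systematically distorts updated beliefs with the
  family of distortion functions D (D p' is D_{p'} : \<Delta>(\<Theta>) \<rightarrow> \<Delta>(\<Theta>)).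
  The defining identity is required wherever the Bayesian posterior is defined.\<close>
definition distorts_with ::
  "('th::finite, 's::finite) rule \<Rightarrow> (('th \<Rightarrow> real) \<Rightarrow> ('th \<Rightarrow> real) \<Rightarrow> ('th \<Rightarrow> real)) \<Rightarrow> bool" where
  "distorts_with \<mu> D \<longleftrightarrow>
     (\<forall>p'. full_support p' \<longrightarrow>
        (\<forall>x. is_dist x \<longrightarrow> is_dist (D p' x)) \<and>
        (\<forall>\<sigma> s. is_experiment \<sigma> \<and> sig_prob \<sigma> p' s > 0 \<longrightarrow>
              \<mu> \<sigma> p' s = D p' (bayes \<sigma> p' s)))"

definition systematically_distorts :: "('th::finite, 's::finite) rule \<Rightarrow> bool" where
  "systematically_distorts \<mu> \<longleftrightarrow> (\<exists>D. distorts_with \<mu> D)"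

end

theory Submission
  imports Defs
begin

text \<open>Bayes' rule depends on the prior only multiplicatively, so reweighting the posterior
  from prior \<open>q\<close> by \<open>d / q\<close> and renormalising gives the posterior from prior \<open>d\<close>.
  Take \<open>d = D p q\<close>: a signal has positive probability under one full-support prior iff it
  has under any other, so the defining identity of the distortion \<open>D (D p q)\<close> applies to
  the update of \<open>D p q\<close>.\<close>

lemma sig_prob_pos_iff:
  assumes "\<And>\<theta>. \<tau> \<theta> t \<ge> 0" and "\<And>\<theta>. p \<theta> > 0"
  shows "sig_prob \<tau> p t > 0 \<longleftrightarrow> (\<exists>\<theta>. \<tau> \<theta> t > 0)"
proof
  assume "sig_prob \<tau> p t > 0"
  then obtain \<theta> where "\<tau> \<theta> t * p \<theta> \<noteq> 0"
    unfolding sig_prob_def by (metis (no_types, lifting) less_irrefl sum.neutral)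
  then show "\<exists>\<theta>. \<tau> \<theta> t > 0"
    using assms(1)[of \<theta>] by (auto simp: order.order_iff_strict)
next
  assume "\<exists>\<theta>. \<tau> \<theta> t > 0"
  then obtain \<theta> where "\<tau> \<theta> t > 0" ..
  then have "0 < \<tau> \<theta> t * p \<theta>"
    using assms(2) by simp
  also have "\<dots> \<le> sig_prob \<tau> p t"
    unfolding sig_prob_def
    by (rule member_le_sum) (auto intro: mult_nonneg_nonneg assms(1) less_imp_le assms(2))
  finally show "sig_prob \<tau> p t > 0" .
qed

lemma bayes_change_of_prior:
  assumes "\<And>\<theta>. q \<theta> \<noteq> 0" and "sig_prob \<tau> q t \<noteq> 0"
  shows "bayes \<tau> d t =
    (\<lambda>\<theta>. bayes \<tau> q t \<theta> * (d \<theta> / q \<theta>) / (\<Sum>\<theta>'\<in>UNIV. bayes \<tau> q t \<theta>' * (d \<theta>' / q \<theta>')))"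
proof -
  have reweighted: "bayes \<tau> q t \<theta> * (d \<theta> / q \<theta>) = \<tau> \<theta> t * d \<theta> / sig_prob \<tau> q t" for \<theta>
    using assms(1)[of \<theta>] unfolding bayes_def by (simp add: field_simps)
  have "(\<Sum>\<theta>\<in>UNIV. bayes \<tau> q t \<theta> * (d \<theta> / q \<theta>)) = sig_prob \<tau> d t / sig_prob \<tau> q t"
    unfolding reweighted sig_prob_def by (simp add: sum_divide_distrib)
  then show ?thesis
    unfolding reweighted using assms(2) by (simp add: bayes_def)
qed

theorem lemma1:
  fixes \<mu> :: "('th::finite, 's::finite) rule"
    and D :: "('th \<Rightarrow> real) \<Rightarrow> ('th \<Rightarrow> real) \<Rightarrow> ('th \<Rightarrow> real)"
    and p :: "'th \<Rightarrow> real"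
    and \<sigma> \<tau> :: "'th \<Rightarrow> 's \<Rightarrow> real"
    and s t :: 's
    and q r :: "'th \<Rightarrow> real"
  assumes "distorts_with \<mu> D"
    and "full_support p"
    and "is_experiment \<sigma>" and "is_experiment \<tau>"
    and "q = bayes \<sigma> p s"
    and "r = bayes \<tau> q t"
    and "full_support q" and "full_support (D p q)"
    and "(\<Sum>\<theta>\<in>UNIV. q \<theta> * \<tau> \<theta> t) > 0"
  shows "\<mu> \<tau> (D p q) t =
    D (D p q) (\<lambda>\<theta>. r \<theta> * (D p q \<theta> / q \<theta>) /
                     (\<Sum>\<theta>'\<in>UNIV. r \<theta>' * (D p q \<theta>' / q \<theta>')))"
proof -
  have q_pos: "\<And>\<theta>. q \<theta> > 0" and Dpq_pos: "\<And>\<theta>. D p q \<theta> > 0"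
    using assms(7,8) unfolding full_support_def by auto
  have \<tau>_nonneg: "\<And>\<theta>. \<tau> \<theta> t \<ge> 0"
    using assms(4) unfolding is_experiment_def is_dist_def by auto
  have "sig_prob \<tau> q t > 0"
    using assms(9) unfolding sig_prob_def by (simp add: mult.commute)
  then have "\<exists>\<theta>. \<tau> \<theta> t > 0"
    by (simp add: sig_prob_pos_iff[of \<tau> t, OF \<tau>_nonneg q_pos])
  then have "sig_prob \<tau> (D p q) t > 0"
    by (simp add: sig_prob_pos_iff[of \<tau> t, OF \<tau>_nonneg Dpq_pos])
  then have "\<mu> \<tau> (D p q) t = D (D p q) (bayes \<tau> (D p q) t)"
    using assms(1,4,8) unfolding distorts_with_def by simp
  also have "bayes \<tau> (D p q) t =
      (\<lambda>\<theta>. r \<theta> * (D p q \<theta> / q \<theta>) / (\<Sum>\<theta>'\<in>UNIV. r \<theta>' * (D p q \<theta>' / q \<theta>')))"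
    unfolding assms(6)
    using q_pos \<open>sig_prob \<tau> q t > 0\<close>
    by (intro bayes_change_of_prior) (simp_all add: less_imp_not_eq2)
  finally show ?thesis .
qed

end
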